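(* Let $\tilde{\mathcal{A}}(R,\boldsymbol{\sigma},\boldsymbol{t})$ be a twisted generalized Weyl construction with $t_1,\dots,t_n$ regular in $R$ and satisfying the consistency equations, and let $\mathcal{A}(R,\boldsymbol{\sigma},\boldsymbol{t})$ be the corresponding twisted generalized Weyl algebra. If $\mathcal{B}$ is a $\Bbbk$-algebra and $\tilde{\varphi}:\tilde{\mathcal{A}}(R,\boldsymbol{\sigma},\boldsymbol{t})\to\mathcal{B}$ is a $\Bbbk$-algebra homomorphism such that $\tilde\varphi(r)$ is regular (not a zero-divisor) in $\mathcal{B}$ for every regular element $r$ of $R$, then $\tilde\varphi$ induces a $\Bbbk$-algebra homomorphism $\varphi:\mathcal{A}(R,\boldsymbol{\sigma},\boldsymbol{t})\to\mathcal{B}$.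
   Context: Let $\Bbbk$ be a field, $R$ a unital associative $\Bbbk$-algebra, $\sigma_1^{1/2},\dots,\sigma_n^{1/2}$ pairwise commuting automorphisms of $R$ ($\sigma_i=(\sigma_i^{1/2})^2$), $t_1,\dots,t_n\in Z(R)$. The TGWC $\tilde{\mathcal{A}}(R,\boldsymbol{\sigma},\boldsymbol{t})$ is obtained from $R$ by adjoining $X_1^\pm,\dots,X_n^\pm$ with relations $X_i^\pm r=\sigma_i^{\pm1}(r)X_i^\pm$, $X_i^\pm X_i^\mp=\sigma_i^{\pm1/2}(t_i)$, $[X_i^\pm,X_j^\mp]=0$ ($i\ne j$); it is $\mathbb{Z}^n$-graded by $\deg r=0$, $\deg X_i^\pm=\pm\mathbf{e}_i$. The TGWA $\mathcal{A}(R,\boldsymbol{\sigma},\boldsymbol{t})$ is $\tilde{\mathcal{A}}/\mathcal{I}$, where $\mathcal{I}$ is the sum of all graded ideals of $\tilde{\mathcal{A}}$ intersecting the degree-zero part trivially. Consistency equations: $\sigma_j^{1/2}(t_i)\sigma_i^{1/2}(t_j)=\sigma_j^{-1/2}(t_i)\sigma_i^{-1/2}(t_j)$ for $i\ne j$, and $\sigma_i^{1/2}\sigma_j^{1/2}(t_k)\sigma_i^{-1/2}\sigma_j^{-1/2}(t_k)=\sigma_i^{1/2}\sigma_j^{-1/2}(t_k)\sigma_i^{-1/2}\sigma_j^{1/2}(t_k)$ for pairwise distinct $i,j,k$; under these, $R$ is identified with the degree-zero parts of $\tilde{\mathcal{A}}$ and $\mathcal{A}$. *)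

theory Defs
  imports Main
begin

definition is_k_algebra :: "('k::field \<Rightarrow> 'a::ring_1) \<Rightarrow> bool" where
  "is_k_algebra e \<longleftrightarrow>
     e 1 = 1 \<and> (\<forall>c d. e (c + d) = e c + e d) \<and> (\<forall>c d. e (c * d) = e c * e d)
     \<and> (\<forall>c x. e c * x = x * e c)"

definition is_k_alg_aut :: "('k::field \<Rightarrow> 'a::ring_1) \<Rightarrow> ('a \<Rightarrow> 'a) \<Rightarrow> bool" where
  "is_k_alg_aut e s \<longleftrightarrow> bij s \<and> (\<forall>x y. s (x + y) = s x + s y) \<and>
     (\<forall>x y. s (x * y) = s x * s y) \<and> s 1 = 1 \<and> (\<forall>c. s (e c) = e c)"

definition regular :: "'a::ring_1 \<Rightarrow> bool" where
  "regular x \<longleftrightarrow> (\<forall>y. (x * y = 0 \<longrightarrow> y = 0) \<and> (y * x = 0 \<longrightarrow> y = 0))"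

section \<open>Free k-algebra on a set of letters: finitely supported functions on words\<close>

definition FA :: "('a list \<Rightarrow> 'k::field) set" where
  "FA = {f. finite {w. f w \<noteq> 0}}"

definition fzero :: "'a list \<Rightarrow> 'k::field" where "fzero = (\<lambda>w. 0)"
definition fone :: "'a list \<Rightarrow> 'k::field" where "fone = (\<lambda>w. if w = [] then 1 else 0)"
definition fgen :: "'a \<Rightarrow> 'a list \<Rightarrow> 'k::field" where "fgen a = (\<lambda>w. if w = [a] then 1 else 0)"
definition fadd :: "('a list \<Rightarrow> 'k::field) \<Rightarrow> ('a list \<Rightarrow> 'k) \<Rightarrow> 'a list \<Rightarrow> 'k" where
  "fadd f g = (\<lambda>w. f w + g w)"
definition fsub :: "('a list \<Rightarrow> 'k::field) \<Rightarrow> ('a list \<Rightarrow> 'k) \<Rightarrow> 'a list \<Rightarrow> 'k" where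
  "fsub f g = (\<lambda>w. f w - g w)"
definition fsmul :: "'k::field \<Rightarrow> ('a list \<Rightarrow> 'k) \<Rightarrow> 'a list \<Rightarrow> 'k" where
  "fsmul c f = (\<lambda>w. c * f w)"
definition fmul :: "('a list \<Rightarrow> 'k::field) \<Rightarrow> ('a list \<Rightarrow> 'k) \<Rightarrow> 'a list \<Rightarrow> 'k" where
  "fmul f g = (\<lambda>w. \<Sum>i\<le>length w. f (take i w) * g (drop i w))"

definition is_ideal :: "('a list \<Rightarrow> 'k::field) set \<Rightarrow> bool" where
  "is_ideal J \<longleftrightarrow> J \<subseteq> FA \<and> fzero \<in> J \<and> (\<forall>f\<in>J. \<forall>g\<in>J. fadd f g \<in> J) \<and>
     (\<forall>c. \<forall>f\<in>J. fsmul c f \<in> J) \<and> (\<forall>f\<in>J. \<forall>g\<in>FA. fmul f g \<in> J \<and> fmul g f \<in> J)"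

definition gen_ideal :: "('a list \<Rightarrow> 'k::field) set \<Rightarrow> ('a list \<Rightarrow> 'k) set" where
  "gen_ideal S = \<Inter>{J. is_ideal J \<and> S \<subseteq> J}"

definition is_k_alg_hom_F :: "('k::field \<Rightarrow> 'b::ring_1) \<Rightarrow> (('a list \<Rightarrow> 'k) \<Rightarrow> 'b) \<Rightarrow> bool" where
  "is_k_alg_hom_F eB \<psi> \<longleftrightarrow> \<psi> fone = 1 \<and>
     (\<forall>f\<in>FA. \<forall>g\<in>FA. \<psi> (fadd f g) = \<psi> f + \<psi> g \<and> \<psi> (fmul f g) = \<psi> f * \<psi> g) \<and>
     (\<forall>c. \<forall>f\<in>FA. \<psi> (fsmul c f) = eB c * \<psi> f)"

section \<open>Letters of the TGWC: Inl r for r in R, Inr (i,True) = X_i^+, Inr (i,False) = X_i^-\<close>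

type_synonym ('r, 'n) letter = "'r + 'n \<times> bool"

definition Xp :: "'n \<Rightarrow> ('r, 'n) letter list \<Rightarrow> 'k::field" where "Xp i = fgen (Inr (i, True))"
definition Xm :: "'n \<Rightarrow> ('r, 'n) letter list \<Rightarrow> 'k::field" where "Xm i = fgen (Inr (i, False))"
definition Rg :: "'r \<Rightarrow> ('r, 'n) letter list \<Rightarrow> 'k::field" where "Rg r = fgen (Inl r)"

definition ldeg :: "('r, 'n) letter \<Rightarrow> 'n \<Rightarrow> int" where
  "ldeg a = (case a of Inl r \<Rightarrow> (\<lambda>j. 0)
                     | Inr (i, b) \<Rightarrow> (\<lambda>j. if j = i then (if b then 1 else -1) else 0))"
definition wdeg :: "('r, 'n) letter list \<Rightarrow> 'n \<Rightarrow> int" where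
  "wdeg w = (\<lambda>j. \<Sum>a\<leftarrow>w. ldeg a j)"

definition component :: "('n \<Rightarrow> int) \<Rightarrow> (('r, 'n) letter list \<Rightarrow> 'k::field) \<Rightarrow> ('r, 'n) letter list \<Rightarrow> 'k" where
  "component d f = (\<lambda>w. if wdeg w = d then f w else 0)"

definition graded :: "(('r, 'n) letter list \<Rightarrow> 'k::field) set \<Rightarrow> bool" where
  "graded J \<longleftrightarrow> (\<forall>f\<in>J. \<forall>d. component d f \<in> J)"

definition F0 :: "(('r, 'n) letter list \<Rightarrow> 'k::field) set" where
  "F0 = {f\<in>FA. \<forall>w. f w \<noteq> 0 \<longrightarrow> wdeg w = (\<lambda>j. 0)}"

text \<open>sh i is sigma_i^{1/2}; sigma_i = sh i o sh i; negative powers via inverses.\<close>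
definition tgwc_rels :: "('k::field \<Rightarrow> 'r::ring_1) \<Rightarrow> ('n \<Rightarrow> 'r \<Rightarrow> 'r) \<Rightarrow> ('n \<Rightarrow> 'r)
    \<Rightarrow> (('r, 'n) letter list \<Rightarrow> 'k) set" where
  "tgwc_rels eR sh t =
     {fsub (fmul (Rg r) (Rg s)) (Rg (r * s)) | r s. True}
   \<union> {fsub (fadd (Rg r) (Rg s)) (Rg (r + s)) | r s. True}
   \<union> {fsub (Rg (eR c)) (fsmul c fone) | c. True}
   \<union> {fsub (fmul (Xp i) (Rg r)) (fmul (Rg ((sh i \<circ> sh i) r)) (Xp i)) | i r. True}
   \<union> {fsub (fmul (Xm i) (Rg r)) (fmul (Rg (inv (sh i \<circ> sh i) r)) (Xm i)) | i r. True}
   \<union> {fsub (fmul (Xp i) (Xm i)) (Rg (sh i (t i))) | i. True}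
   \<union> {fsub (fmul (Xm i) (Xp i)) (Rg (inv (sh i) (t i))) | i. True}
   \<union> {fsub (fmul (Xp i) (Xm j)) (fmul (Xm j) (Xp i)) | i j. i \<noteq> j}"

definition tgwc_ideal :: "('k::field \<Rightarrow> 'r::ring_1) \<Rightarrow> ('n \<Rightarrow> 'r \<Rightarrow> 'r) \<Rightarrow> ('n \<Rightarrow> 'r)
    \<Rightarrow> (('r, 'n) letter list \<Rightarrow> 'k) set" where
  "tgwc_ideal eR sh t = gen_ideal (tgwc_rels eR sh t)"

text \<open>Preimage in FA of the ideal I of the TGWC: I is the sum of all graded ideals of the TGWC
  meeting the degree-zero part trivially; such ideals correspond to graded ideals J of FA
  containing K with J \<inter> (F0 + K) \<subseteq> K.\<close>
definition tgwa_ideal :: "('k::field \<Rightarrow> 'r::ring_1) \<Rightarrow> ('n \<Rightarrow> 'r \<Rightarrow> 'r) \<Rightarrow> ('n \<Rightarrow> 'r)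
    \<Rightarrow> (('r, 'n) letter list \<Rightarrow> 'k) set" where
  "tgwa_ideal eR sh t =
     (let K = tgwc_ideal eR sh t in
      gen_ideal (\<Union>{J. is_ideal J \<and> graded J \<and> K \<subseteq> J \<and>
                       J \<inter> {fadd a b | a b. a \<in> F0 \<and> b \<in> K} \<subseteq> K}))"

end

theory Submission
  imports Defs
begin

text \<open>
  Let \<open>J\<close> be one of the graded ideals summed in \<open>\<I>\<close>. As \<open>J\<close> is graded, it is enough that \<open>\<psi>\<close>
  kills the homogeneous elements \<open>g\<close> of \<open>J\<close>, by induction on \<open>|deg g|\<close>. In degree \<open>0\<close>, \<open>g\<close> lies in
  \<open>J \<inter> R\<close>, which is zero in the TGWC. Otherwise, if the \<open>i\<close>-th coordinate of \<open>deg g\<close> has sign \<open>\<plusminus>\<close>,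
  then \<open>X\<^sub>i\<^sup>\<mp> g \<in> J\<close> is homogeneous of smaller degree, so \<open>\<psi>(X\<^sub>i\<^sup>\<mp> g) = 0\<close>; the relation
  \<open>X\<^sub>i\<^sup>\<plusminus> X\<^sub>i\<^sup>\<mp> = \<sigma>\<^sub>i\<^sup>\<plusminus>\<^sup>1\<^sup>/\<^sup>2(t\<^sub>i)\<close> then gives \<open>\<psi>(\<sigma>\<^sub>i\<^sup>\<plusminus>\<^sup>1\<^sup>/\<^sup>2(t\<^sub>i)) \<psi>(g) = 0\<close>, and the first factor is
  regular.
\<close>

lemma FA_fzero: "fzero \<in> FA"
  by (simp add: FA_def fzero_def)

lemma FA_fgen: "fgen a \<in> FA"
proof -
  have "{w. fgen a w \<noteq> 0} \<subseteq> {[a]}" by (auto simp: fgen_def)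
  then show ?thesis unfolding FA_def by (auto intro: finite_subset)
qed

lemma FA_fadd: "f \<in> FA \<Longrightarrow> g \<in> FA \<Longrightarrow> fadd f g \<in> FA"
proof -
  assume "f \<in> FA" "g \<in> FA"
  moreover have "{w. fadd f g w \<noteq> 0} \<subseteq> {w. f w \<noteq> 0} \<union> {w. g w \<noteq> 0}"
    by (auto simp: fadd_def)
  ultimately show ?thesis unfolding FA_def by (auto intro: finite_subset)
qed

lemma FA_fsmul: "f \<in> FA \<Longrightarrow> fsmul c f \<in> FA"
proof -
  assume "f \<in> FA"
  moreover have "{w. fsmul c f w \<noteq> 0} \<subseteq> {w. f w \<noteq> 0}" by (auto simp: fsmul_def)
  ultimately show ?thesis unfolding FA_def by (auto intro: finite_subset)
qed

lemma FA_fmul: "f \<in> FA \<Longrightarrow> g \<in> FA \<Longrightarrow> fmul f g \<in> FA"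
proof -
  assume "f \<in> FA" "g \<in> FA"
  then have fin: "finite ((\<lambda>(u, v). u @ v) ` ({w. f w \<noteq> 0} \<times> {w. g w \<noteq> 0}))"
    unfolding FA_def by auto
  have "{w. fmul f g w \<noteq> 0} \<subseteq> (\<lambda>(u, v). u @ v) ` ({w. f w \<noteq> 0} \<times> {w. g w \<noteq> 0})"
  proof
    fix w assume "w \<in> {w. fmul f g w \<noteq> 0}"
    then obtain i where "f (take i w) * g (drop i w) \<noteq> 0"
      unfolding fmul_def by (meson mem_Collect_eq sum.neutral)
    then show "w \<in> (\<lambda>(u, v). u @ v) ` ({w. f w \<noteq> 0} \<times> {w. g w \<noteq> 0})"
      by (auto intro!: image_eqI[of w _ "(take i w, drop i w)"])
  qed
  with fin show ?thesis unfolding FA_def by (auto intro: finite_subset)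
qed

lemma fsub_eq_fadd_fsmul: "fsub f g = fadd f (fsmul (-1) g)"
  by (auto simp: fsub_def fadd_def fsmul_def)

lemma fmul_fgen_Nil [simp]: "fmul (fgen a) g [] = 0"
  by (simp add: fmul_def fgen_def)

lemma fmul_fgen_Cons [simp]: "fmul (fgen a) g (b # w) = (if b = a then g w else 0)"
proof -
  have "fmul (fgen a) g (b # w) = (\<Sum>i\<le>length w. fgen a (b # take i w) * g (drop i w))"
    unfolding fmul_def by (simp add: sum.atMost_Suc_shift fgen_def del: sum.atMost_Suc)
  also have "\<dots> = (\<Sum>i\<le>length w. if i = 0 then (if b = a then g w else 0) else 0)"
    by (rule sum.cong) (auto simp: fgen_def)
  finally show ?thesis by simp
qed

lemma gen_ideal_superset: "S \<subseteq> gen_ideal S"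
  by (auto simp: gen_ideal_def)

lemma gen_ideal_fzero: "fzero \<in> gen_ideal S"
  by (auto simp: gen_ideal_def is_ideal_def)

lemma gen_ideal_minimal: "is_ideal J \<Longrightarrow> S \<subseteq> J \<Longrightarrow> gen_ideal S \<subseteq> J"
  by (auto simp: gen_ideal_def)

lemma ideal_subset_FA: "is_ideal J \<Longrightarrow> f \<in> J \<Longrightarrow> f \<in> FA"
  by (auto simp: is_ideal_def)

lemma ideal_fmul_left: "is_ideal J \<Longrightarrow> f \<in> J \<Longrightarrow> g \<in> FA \<Longrightarrow> fmul g f \<in> J"
  by (simp add: is_ideal_def)

lemma ideal_fsub: "is_ideal J \<Longrightarrow> f \<in> J \<Longrightarrow> g \<in> J \<Longrightarrow> fsub f g \<in> J"
  by (simp add: is_ideal_def fsub_eq_fadd_fsmul)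

lemma k_algebra_minus_one: "is_k_algebra e \<Longrightarrow> e (-1) = -1"
proof -
  assume e: "is_k_algebra e"
  then have "e 0 = e 0 + e 0" unfolding is_k_algebra_def by (metis add_0)
  then have "e 0 = 0" by simp
  moreover have "e 0 = e 1 + e (-1)" using e unfolding is_k_algebra_def by (metis add.right_inverse)
  ultimately show ?thesis using e by (simp add: is_k_algebra_def eq_neg_iff_add_eq_0 add.commute)
qed

lemma hom_fadd: "is_k_alg_hom_F eB \<psi> \<Longrightarrow> f \<in> FA \<Longrightarrow> g \<in> FA \<Longrightarrow> \<psi> (fadd f g) = \<psi> f + \<psi> g"
  and hom_fmul: "is_k_alg_hom_F eB \<psi> \<Longrightarrow> f \<in> FA \<Longrightarrow> g \<in> FA \<Longrightarrow> \<psi> (fmul f g) = \<psi> f * \<psi> g"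
  and hom_fsmul: "is_k_alg_hom_F eB \<psi> \<Longrightarrow> f \<in> FA \<Longrightarrow> \<psi> (fsmul c f) = eB c * \<psi> f"
  by (simp_all add: is_k_alg_hom_F_def)

lemma hom_fzero: "is_k_alg_hom_F eB \<psi> \<Longrightarrow> \<psi> fzero = 0"
  using hom_fadd[OF _ FA_fzero FA_fzero] by (simp add: fadd_def fzero_def)

lemma hom_fsub:
  assumes hom: "is_k_alg_hom_F eB \<psi>" and "is_k_algebra eB" "f \<in> FA" "g \<in> FA"
  shows "\<psi> (fsub f g) = \<psi> f - \<psi> g"
  using hom_fadd[OF hom \<open>f \<in> FA\<close> FA_fsmul[OF \<open>g \<in> FA\<close>]] hom_fsmul[OF hom \<open>g \<in> FA\<close>]
    k_algebra_minus_one[OF \<open>is_k_algebra eB\<close>]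
  by (simp add: fsub_eq_fadd_fsmul)

lemma hom_kernel_is_ideal:
  assumes hom: "is_k_alg_hom_F eB \<psi>"
  shows "is_ideal {f \<in> FA. \<psi> f = 0}"
  using hom_fzero[OF hom] hom_fadd[OF hom] hom_fmul[OF hom] hom_fsmul[OF hom]
    FA_fzero FA_fadd FA_fsmul FA_fmul
  unfolding is_ideal_def by auto

lemma regular_bij_mult_iff:
  assumes bij: "bij s" and mult: "\<And>x y. s (x * y) = s x * s y" and zero: "s 0 = 0"
  shows "regular (s x) \<longleftrightarrow> regular x"
proof -
  have eq0: "s y = 0 \<longleftrightarrow> y = 0" for y
    using bij zero by (metis bij_pointE)
  have "regular (s x) \<longleftrightarrow> (\<forall>y. (s x * s y = 0 \<longrightarrow> s y = 0) \<and> (s y * s x = 0 \<longrightarrow> s y = 0))"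
    unfolding regular_def using bij by (metis bij_pointE)
  also have "\<dots> \<longleftrightarrow> regular x"
    unfolding regular_def mult[symmetric] eq0 ..
  finally show ?thesis .
qed

lemma k_alg_aut_regular:
  assumes aut: "is_k_alg_aut e s" and x: "regular x"
  shows "regular (s x)" and "regular (inv s x)"
proof -
  have bij: "bij s" and mult: "\<And>x y. s (x * y) = s x * s y"
    and add: "\<And>x y. s (x + y) = s x + s y"
    using aut unfolding is_k_alg_aut_def by auto
  have "s 0 = 0" using add[of 0 0] by simp
  with bij mult have iff: "regular (s y) \<longleftrightarrow> regular y" for y
    by (intro regular_bij_mult_iff) simp_all
  show "regular (s x)" using iff x by blast
  show "regular (inv s x)" using iff[of "inv s x"] x bij by (simp add: bij_is_surj surj_f_inv_f)
qed

definition homogeneous :: "('n \<Rightarrow> int) \<Rightarrow> (('r, 'n) letter list \<Rightarrow> 'k::field) \<Rightarrow> bool" where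
  "homogeneous d f \<longleftrightarrow> (\<forall>w. f w \<noteq> 0 \<longrightarrow> wdeg w = d)"

lemma homogeneous_component: "homogeneous d (component d f)"
  by (simp add: homogeneous_def component_def)

lemma homogeneous_fmul_fgen:
  assumes "homogeneous d g"
  shows "homogeneous (\<lambda>j. ldeg a j + d j) (fmul (fgen a) g)"
  unfolding homogeneous_def
proof (intro allI impI)
  fix w assume "fmul (fgen a) g w \<noteq> 0"
  then obtain w' where "w = a # w'" "g w' \<noteq> 0"
    by (cases w) (auto split: if_splits)
  with assms show "wdeg w = (\<lambda>j. ldeg a j + d j)"
    by (simp add: homogeneous_def wdeg_def fun_eq_iff)
qed

lemma sum_abs_fun_upd_less:
  fixes d :: "'n::finite \<Rightarrow> int"
  assumes "\<bar>x\<bar> < \<bar>d i\<bar>"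
  shows "(\<Sum>j\<in>UNIV. nat \<bar>(d(i := x)) j\<bar>) < (\<Sum>j\<in>UNIV. nat \<bar>d j\<bar>)"
proof -
  have "(\<Sum>j\<in>UNIV. nat \<bar>(d(i := x)) j\<bar>) = nat \<bar>x\<bar> + (\<Sum>j\<in>UNIV - {i}. nat \<bar>d j\<bar>)"
    by (subst sum.remove[of UNIV i]) auto
  moreover have "(\<Sum>j\<in>UNIV. nat \<bar>d j\<bar>) = nat \<bar>d i\<bar> + (\<Sum>j\<in>UNIV - {i}. nat \<bar>d j\<bar>)"
    by (subst sum.remove[of UNIV i]) auto
  ultimately show ?thesis using assms by simp
qed

lemma opposite_letters_rel:
  "fsub (fmul (fgen (Inr (i, \<not> b))) (fgen (Inr (i, b))))
     (Rg (if b then inv (sh i) (t i) else sh i (t i))) \<in> tgwc_rels eR sh t"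
  by (cases b) (auto simp: tgwc_rels_def Xp_def[symmetric] Xm_def[symmetric])

lemma hom_cancel_left_by_relation:
  assumes B_alg: "is_k_algebra eB" and hom: "is_k_alg_hom_F eB \<psi>"
    and kill: "\<forall>f\<in>tgwc_ideal eR sh t. \<psi> f = 0"
    and rel: "fsub (fmul a b) (Rg r) \<in> tgwc_rels eR sh t" and reg: "regular (\<psi> (Rg r))"
    and FA: "a \<in> FA" "b \<in> FA" "g \<in> FA"
    and bg: "\<psi> (fmul b g) = 0"
  shows "\<psi> g = 0"
proof -
  have "\<psi> (fsub (fmul a b) (Rg r)) = 0"
    using kill rel gen_ideal_superset unfolding tgwc_ideal_def by blast
  then have "\<psi> (Rg r) = \<psi> (fmul a b)"
    using hom_fsub[OF hom B_alg FA_fmul[OF FA(1,2)] FA_fgen] unfolding Rg_def by simp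
  then have "\<psi> (Rg r) * \<psi> g = \<psi> a * (\<psi> b * \<psi> g)"
    by (simp add: hom_fmul[OF hom FA(1,2)] mult.assoc)
  also have "\<dots> = 0" using bg hom_fmul[OF hom FA(2,3)] by simp
  finally show ?thesis using reg unfolding regular_def by blast
qed

lemma hom_vanishes_on_homogeneous:
  fixes eR :: "'k::field \<Rightarrow> 'r::ring_1"
    and sh :: "'n::finite \<Rightarrow> 'r \<Rightarrow> 'r"
    and \<psi> :: "(('r, 'n) letter list \<Rightarrow> 'k) \<Rightarrow> 'b::ring_1"
  assumes B_alg: "is_k_algebra eB"
    and sh_aut: "\<And>i. is_k_alg_aut eR (sh i)"
    and t_regular: "\<And>i. regular (t i)"
    and hom: "is_k_alg_hom_F eB \<psi>"
    and kill: "\<forall>f\<in>tgwc_ideal eR sh t. \<psi> f = 0"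
    and reg_pres: "\<And>r. regular r \<Longrightarrow> regular (\<psi> (Rg r))"
    and J: "is_ideal J"
    and J_deg0: "J \<inter> {fadd a b | a b. a \<in> F0 \<and> b \<in> tgwc_ideal eR sh t} \<subseteq> tgwc_ideal eR sh t"
  shows "g \<in> J \<Longrightarrow> homogeneous d g \<Longrightarrow> \<psi> g = 0"
proof (induction d arbitrary: g rule: measure_induct_rule[where f = "\<lambda>d. \<Sum>j\<in>UNIV. nat \<bar>d j\<bar>"])
  case (less d)
  have gFA: "g \<in> FA" using J less.prems(1) by (rule ideal_subset_FA)
  show ?case
  proof (cases "d = (\<lambda>j. 0)")
    case True
    then have "g \<in> F0" using gFA less.prems(2) by (simp add: F0_def homogeneous_def)
    moreover have "g = fadd g fzero" by (simp add: fadd_def fzero_def)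
    moreover have "fzero \<in> tgwc_ideal eR sh t" unfolding tgwc_ideal_def by (rule gen_ideal_fzero)
    ultimately have "g \<in> tgwc_ideal eR sh t" using J_deg0 less.prems(1) by blast
    then show ?thesis using kill by blast
  next
    case False
    then obtain i where "d i \<noteq> 0" by auto
    define a :: "('r, 'n) letter" where "a = Inr (i, d i < 0)"
    define d' where "d' = d(i := d i + (if d i < 0 then 1 else -1))"
    have "\<bar>d i + (if d i < 0 then 1 else -1)\<bar> < \<bar>d i\<bar>" using \<open>d i \<noteq> 0\<close> by simp
    then have "(\<Sum>j\<in>UNIV. nat \<bar>d' j\<bar>) < (\<Sum>j\<in>UNIV. nat \<bar>d j\<bar>)"
      unfolding d'_def by (rule sum_abs_fun_upd_less)
    moreover have "fmul (fgen a) g \<in> J" using J less.prems(1) FA_fgen by (rule ideal_fmul_left)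
    moreover have "homogeneous d' (fmul (fgen a) g)"
    proof -
      have "(\<lambda>j. ldeg a j + d j) = d'" by (auto simp: a_def d'_def ldeg_def)
      then show ?thesis using homogeneous_fmul_fgen[OF less.prems(2), of a] by simp
    qed
    ultimately have ag: "\<psi> (fmul (fgen a) g) = 0" by (rule less.IH)
    have reg: "regular (if d i < 0 then inv (sh i) (t i) else sh i (t i))"
      using k_alg_aut_regular[OF sh_aut t_regular] by simp
    have rel: "fsub (fmul (fgen (Inr (i, \<not> d i < 0))) (fgen a))
        (Rg (if d i < 0 then inv (sh i) (t i) else sh i (t i))) \<in> tgwc_rels eR sh t"
      unfolding a_def by (rule opposite_letters_rel)
    show ?thesis
      by (rule hom_cancel_left_by_relation[OF B_alg hom kill rel reg_pres[OF reg]
            FA_fgen FA_fgen gFA ag])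
  qed
qed

lemma hom_vanishes_on_graded_ideal:
  assumes hom: "is_k_alg_hom_F eB \<psi>" and J: "is_ideal J" "graded J"
    and homog: "\<And>d g. g \<in> J \<Longrightarrow> homogeneous d g \<Longrightarrow> \<psi> g = 0"
    and f: "f \<in> J"
  shows "\<psi> f = 0"
proof -
  have "finite D \<Longrightarrow> f \<in> J \<Longrightarrow> wdeg ` {w. f w \<noteq> 0} \<subseteq> D \<Longrightarrow> \<psi> f = 0" for D f
  proof (induction D arbitrary: f rule: finite_induct)
    case empty
    then have "f = fzero" by (auto simp: fzero_def)
    then show ?case using hom_fzero[OF hom] by simp
  next
    case (insert d D)
    define c where "c = component d f"
    have cJ: "c \<in> J" using J(2) insert.prems(1) unfolding graded_def c_def by blast
    then have hJ: "fsub f c \<in> J" using ideal_fsub[OF J(1) insert.prems(1)] by blast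
    have "wdeg ` {w. fsub f c w \<noteq> 0} \<subseteq> D" using insert.prems(2)
      by (auto simp: c_def fsub_def component_def split: if_splits)
    then have "\<psi> (fsub f c) = 0" using insert.IH hJ by blast
    moreover have "\<psi> c = 0" using homog[OF cJ] homogeneous_component unfolding c_def by blast
    moreover have "\<psi> (fadd c (fsub f c)) = \<psi> c + \<psi> (fsub f c)"
      using hom_fadd[OF hom] ideal_subset_FA[OF J(1) cJ] ideal_subset_FA[OF J(1) hJ] by blast
    moreover have "fadd c (fsub f c) = f" by (simp add: fadd_def fsub_def)
    ultimately show ?case by simp
  qed
  moreover have "finite (wdeg ` {w. f w \<noteq> 0})" using ideal_subset_FA[OF J(1) f] by (simp add: FA_def)
  ultimately show ?thesis using f by blast
qed

theorem mainTheorem6: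
  fixes eR :: "'k::field \<Rightarrow> 'r::ring_1"
    and eB :: "'k \<Rightarrow> 'b::ring_1"
    and sh :: "'n::finite \<Rightarrow> 'r \<Rightarrow> 'r"
    and t :: "'n \<Rightarrow> 'r"
    and \<psi> :: "(('r, 'n) letter list \<Rightarrow> 'k) \<Rightarrow> 'b"
  assumes R_alg: "is_k_algebra eR"
    and B_alg: "is_k_algebra eB"
    and sh_aut: "\<And>i. is_k_alg_aut eR (sh i)"
    and sh_comm: "\<And>i j. sh i \<circ> sh j = sh j \<circ> sh i"
    and t_central: "\<And>i r. t i * r = r * t i"
    and t_regular: "\<And>i. regular (t i)"
    and consist1: "\<And>i j. i \<noteq> j \<Longrightarrow>
        sh j (t i) * sh i (t j) = inv (sh j) (t i) * inv (sh i) (t j)"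
    and consist2: "\<And>i j k. i \<noteq> j \<Longrightarrow> j \<noteq> k \<Longrightarrow> i \<noteq> k \<Longrightarrow>
        sh i (sh j (t k)) * inv (sh i) (inv (sh j) (t k))
          = sh i (inv (sh j) (t k)) * inv (sh i) (sh j (t k))"
    and hom: "is_k_alg_hom_F eB \<psi>"
    and hom_kills_K: "\<forall>f\<in>tgwc_ideal eR sh t. \<psi> f = 0"
    and reg_pres: "\<And>r. regular r \<Longrightarrow> regular (\<psi> (Rg r))"
  shows "\<forall>f\<in>tgwa_ideal eR sh t. \<psi> f = 0"
proof -
  let ?K = "tgwc_ideal eR sh t"
  have "\<Union>{J. is_ideal J \<and> graded J \<and> ?K \<subseteq> J \<and> J \<inter> {fadd a b | a b. a \<in> F0 \<and> b \<in> ?K} \<subseteq> ?K}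
      \<subseteq> {f \<in> FA. \<psi> f = 0}"
  proof
    fix f assume "f \<in> \<Union>{J. is_ideal J \<and> graded J \<and> ?K \<subseteq> J \<and>
                            J \<inter> {fadd a b | a b. a \<in> F0 \<and> b \<in> ?K} \<subseteq> ?K}"
    then obtain J where J: "is_ideal J" "graded J"
      and J_deg0: "J \<inter> {fadd a b | a b. a \<in> F0 \<and> b \<in> ?K} \<subseteq> ?K" and f: "f \<in> J"
      by blast
    have "\<psi> f = 0"
      using hom_vanishes_on_graded_ideal[OF hom J _ f]
        hom_vanishes_on_homogeneous[OF B_alg sh_aut t_regular hom hom_kills_K reg_pres J(1) J_deg0]
      by blast
    with ideal_subset_FA[OF J(1) f] show "f \<in> {f \<in> FA. \<psi> f = 0}" by simp
  qed
  then have "tgwa_ideal eR sh t \<subseteq> {f \<in> FA. \<psi> f = 0}"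
    unfolding tgwa_ideal_def Let_def by (rule gen_ideal_minimal[OF hom_kernel_is_ideal[OF hom]])
  then show ?thesis by blast
qed

end
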